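(* Under the disjoint $k$-cliques model with parameters $n,k,p,q$ (where $m=n/k$), every adaptive group testing scheme that exactly recovers the infection status vector $X=(X_1,\dots,X_n)$ from noiseless tests, using a (random) number $T$ of tests, satisfies $$\mathbb{E}[T]\ \ge\ m\cdot \mathbb{E}_Z\Big[(k-Z)\,\mathsf{h}_\mathsf{b}\big(1-(1-q)^Z\big)\Big],$$ where $Z\sim\mathsf{Binom}(k,p)$.
   Context: Stochastic block infection model $\mathsf{SBIM}(n,k,p,q_1,q_2)$: the vertex set $[n]$ is partitioned into $m=n/k$ known communities $\mathcal{C}_1,\dots,\mathcal{C}_m$, each of size $k$. Each vertex is independently a seed with probability $p\in(0,1]$. Then every seed $v$ independently infects each other vertex $u$ in its own community with probability $q_1$ and each vertex outside its community with probability $q_2$ (all transmission events mutually independent and independent of seed selection). $X_v=1$ iff $v$ is a seed or is infected by some seed. The disjoint $k$-cliques model is $\mathsf{SBIM}(n,k,p,q,0)$ with $q\in[0,1]$. Group testing: a test on a set $S\subseteq[n]$ returns $\bigvee_{i\in S}X_i$ (noiselessly); an adaptive scheme chooses each test based on previous outcomes, and must recover $X$ exactly (zero error). $\mathsf{h}_\mathsf{b}(x)=-x\log_2x-(1-x)\log_2(1-x)$ is the binary entropy function (bits). *)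

theory Defs
  imports "HOL-Probability.Probability"
begin

text \<open>Binary entropy in bits. Note: in Isabelle log 2 0 = 0, so 0 * log 2 0 = 0,
  matching the convention 0 log 0 = 0.\<close>
definition hb :: "real \<Rightarrow> real" where
  "hb x = - x * log 2 x - (1 - x) * log 2 (1 - x)"

text \<open>Vertices are 0..<n; community j is {j*k ..< (j+1)*k}, i.e. vertex v lies in
  community v div k. Infection status vectors are functions nat => bool that are
  False outside 0..<n.\<close>
definition SBIM :: "nat \<Rightarrow> nat \<Rightarrow> real \<Rightarrow> real \<Rightarrow> real \<Rightarrow> (nat \<Rightarrow> bool) pmf" where
  "SBIM n k p q1 q2 =
     bind_pmf (Pi_pmf {..<n} False (\<lambda>_. bernoulli_pmf p)) (\<lambda>s.
     bind_pmf (Pi_pmf {(v, u). v < n \<and> u < n \<and> v \<noteq> u} False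
                 (\<lambda>(v, u). bernoulli_pmf (if v div k = u div k then q1 else q2))) (\<lambda>e.
     return_pmf (\<lambda>u. u < n \<and> (s u \<or> (\<exists>v<n. v \<noteq> u \<and> s v \<and> e (v, u))))))"

text \<open>Deterministic adaptive group testing schemes as finite decision trees:
  Test S neg pos performs the test on S and continues with neg if the outcome is
  negative and with pos otherwise; Decide y outputs the estimate y.\<close>
datatype gt_scheme = Decide "nat \<Rightarrow> bool" | Test "nat set" gt_scheme gt_scheme

definition test_outcome :: "nat set \<Rightarrow> (nat \<Rightarrow> bool) \<Rightarrow> bool" where
  "test_outcome S x = (\<exists>i\<in>S. x i)"

fun gt_run :: "gt_scheme \<Rightarrow> (nat \<Rightarrow> bool) \<Rightarrow> (nat \<Rightarrow> bool)" where
  "gt_run (Decide y) x = y"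
| "gt_run (Test S neg pos) x = (if test_outcome S x then gt_run pos x else gt_run neg x)"

fun gt_num_tests :: "gt_scheme \<Rightarrow> (nat \<Rightarrow> bool) \<Rightarrow> nat" where
  "gt_num_tests (Decide y) x = 0"
| "gt_num_tests (Test S neg pos) x =
     Suc (if test_outcome S x then gt_num_tests pos x else gt_num_tests neg x)"

end

theory Submission
  imports Defs
begin

text \<open>Given the seed set, the infection indicators are independent Bernoulli variables: a
  non-seed in a community containing Z seeds is infected with probability 1 - (1 - q)^Z. A
  zero-error adaptive scheme is a binary decision tree whose leaves identify X, so by Kraft's
  inequality and Gibbs' inequality its expected number of tests, conditionally on the seeds, is
  at least the entropy of this product distribution, i.e. the sum over communities of
  (k - Z) h_b(1 - (1 - q)^Z). Averaging over the seeds, Z is Binomial(k, p) in each of the m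
  communities.\<close>

definition pmf_entropy :: "'a pmf \<Rightarrow> real" where
  "pmf_entropy D = measure_pmf.expectation D (\<lambda>x. - log 2 (pmf D x))"

lemma gt_kraft_inequality:
  assumes "finite S" and "inj_on (gt_run A) S"
  shows "(\<Sum>x\<in>S. (1/2::real) ^ gt_num_tests A x) \<le> 1"
  using assms
proof (induction A arbitrary: S)
  case (Decide y)
  then have "card S \<le> 1"
    by (simp add: inj_on_def card_le_Suc0_iff_eq)
  then show ?case by simp
next
  case (Test T neg pos)
  let ?w = "\<lambda>B x. (1/2::real) ^ gt_num_tests B x"
  define S\<^sub>p where "S\<^sub>p = {x\<in>S. test_outcome T x}"
  define S\<^sub>n where "S\<^sub>n = {x\<in>S. \<not> test_outcome T x}"
  have "inj_on (gt_run pos) S\<^sub>p" "inj_on (gt_run neg) S\<^sub>n"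
    using Test.prems(2) by (auto simp: inj_on_def S\<^sub>p_def S\<^sub>n_def)
  then have "(\<Sum>x\<in>S\<^sub>p. ?w pos x) \<le> 1" "(\<Sum>x\<in>S\<^sub>n. ?w neg x) \<le> 1"
    using Test.IH Test.prems(1) by (auto simp: S\<^sub>p_def S\<^sub>n_def)
  moreover have "(\<Sum>x\<in>S. ?w (Test T neg pos) x)
      = (\<Sum>x\<in>S\<^sub>p. ?w (Test T neg pos) x) + (\<Sum>x\<in>S\<^sub>n. ?w (Test T neg pos) x)"
    using Test.prems(1)
    by (subst sum.union_disjoint[symmetric]) (auto simp: S\<^sub>p_def S\<^sub>n_def intro: sum.cong)
  moreover have "(\<Sum>x\<in>S\<^sub>p. ?w (Test T neg pos) x) = (\<Sum>x\<in>S\<^sub>p. ?w pos x) / 2"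
    "(\<Sum>x\<in>S\<^sub>n. ?w (Test T neg pos) x) = (\<Sum>x\<in>S\<^sub>n. ?w neg x) / 2"
    by (simp_all add: sum_divide_distrib S\<^sub>p_def S\<^sub>n_def)
  ultimately show ?case by simp
qed

lemma gibbs_term_le:
  fixes P :: real and t :: nat
  assumes "0 < P"
  shows "P * (- log 2 P) - P * t \<le> ((1/2) ^ t - P) / ln 2"
proof -
  define Q :: real where "Q = (1/2) ^ t"
  have "0 < Q" by (simp add: Q_def)
  then have "P * ln (Q / P) / ln 2 \<le> P * (Q / P - 1) / ln 2"
    using assms by (intro divide_right_mono mult_left_mono ln_le_minus_one) auto
  also have "P * (Q / P - 1) = Q - P" using assms by (simp add: field_simps)
  also have "ln (Q / P) = - t * ln 2 - ln P"
    using \<open>0 < Q\<close> assms by (simp add: ln_div Q_def ln_realpow)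
  finally show ?thesis
    unfolding Q_def[symmetric] log_def by (simp add: field_simps)
qed

lemma pmf_entropy_le_expected_num_tests:
  assumes fin: "finite (set_pmf D)" and recovers: "\<forall>x\<in>set_pmf D. gt_run A x = x"
  shows "pmf_entropy D \<le> measure_pmf.expectation D (\<lambda>x. real (gt_num_tests A x))"
proof -
  let ?S = "set_pmf D"
  have "pmf_entropy D - measure_pmf.expectation D (\<lambda>x. real (gt_num_tests A x))
      = (\<Sum>x\<in>?S. pmf D x * (- log 2 (pmf D x)) - pmf D x * gt_num_tests A x)"
    unfolding pmf_entropy_def
    by (simp add: integral_measure_pmf_real[OF fin] sum_subtractf sum_negf mult.commute)
  also have "\<dots> \<le> (\<Sum>x\<in>?S. ((1/2) ^ gt_num_tests A x - pmf D x) / ln 2)"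
    by (intro sum_mono gibbs_term_le) (simp add: pmf_positive)
  also have "\<dots> = ((\<Sum>x\<in>?S. (1/2) ^ gt_num_tests A x) - 1) / ln 2"
    using fin by (simp add: sum_divide_distrib[symmetric] sum_subtractf sum_pmf_eq_1)
  also have "\<dots> \<le> 0"
    using gt_kraft_inequality[OF fin] recovers by (intro divide_nonpos_pos) (auto simp: inj_on_def)
  finally show ?thesis by simp
qed

lemma pmf_map_inj_on:
  assumes "inj_on f A" and "set_pmf M \<subseteq> A" and "x \<in> A"
  shows "pmf (map_pmf f M) (f x) = pmf M x"
proof (cases "x \<in> set_pmf M")
  case True
  then show ?thesis
    using assms by (intro pmf_map_inj) (auto intro: inj_on_subset)
next
  case False
  then have "f x \<notin> f ` set_pmf M"
    using assms by (auto dest: inj_onD)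
  then show ?thesis
    using False by (simp add: pmf_map_outside set_pmf_iff)
qed

lemma set_pmf_Pi_pmf_nested_subset:
  assumes finI: "finite I" and finJ: "\<And>i. i \<in> I \<Longrightarrow> finite (J i)"
  shows "set_pmf (Pi_pmf I (\<lambda>_. d) (\<lambda>i. Pi_pmf (J i) d (Q i)))
           \<subseteq> {G. \<forall>i j. \<not> (i \<in> I \<and> j \<in> J i) \<longrightarrow> G i j = d}"
proof
  fix H assume "H \<in> set_pmf (Pi_pmf I (\<lambda>_. d) (\<lambda>i. Pi_pmf (J i) d (Q i)))"
  then have H: "H \<in> PiE_dflt I (\<lambda>_. d) (set_pmf \<circ> (\<lambda>i. Pi_pmf (J i) d (Q i)))"
    by (rule subsetD[OF set_Pi_pmf_subset'[OF finI]])
  have "H i j = d" if "\<not> (i \<in> I \<and> j \<in> J i)" for i j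
  proof (cases "i \<in> I")
    case True
    then have "H i \<in> set_pmf (Pi_pmf (J i) d (Q i))"
      using H by (simp add: PiE_dflt_def)
    then have "H i \<in> {h. \<forall>j. j \<notin> J i \<longrightarrow> h j = d}"
      by (rule subsetD[OF set_Pi_pmf_subset[OF finJ[OF True]]])
    then show ?thesis
      using that True by simp
  next
    case False
    then show ?thesis
      using H by (simp add: PiE_dflt_def)
  qed
  then show "H \<in> {G. \<forall>i j. \<not> (i \<in> I \<and> j \<in> J i) \<longrightarrow> G i j = d}"
    by simp
qed

lemma Pi_pmf_group_snd:
  assumes finI: "finite I" and finJ: "\<And>i. i \<in> I \<Longrightarrow> finite (J i)"
  shows "Pi_pmf {(j, i). i \<in> I \<and> j \<in> J i} d P =
         map_pmf (\<lambda>G (j, i). if i \<in> I \<and> j \<in> J i then G i j else d)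
           (Pi_pmf I (\<lambda>_. d) (\<lambda>i. Pi_pmf (J i) d (\<lambda>j. P (j, i))))"
proof (rule pmf_eqI)
  fix f
  define K where "K = {(j, i). i \<in> I \<and> j \<in> J i}"
  define g where "g = (\<lambda>G (j, i). if i \<in> I \<and> j \<in> J i then G i j else d)"
  define M where "M = Pi_pmf I (\<lambda>_. d) (\<lambda>i. Pi_pmf (J i) d (\<lambda>j. P (j, i)))"
  define D where "D = {G. \<forall>i j. \<not> (i \<in> I \<and> j \<in> J i) \<longrightarrow> G i j = d}"
  have K_swap: "K = prod.swap ` Sigma I J"
    by (auto simp: K_def image_iff)
  then have finK: "finite K"
    using finI finJ by simp
  show "pmf (Pi_pmf K d P) f = pmf (map_pmf g M) f"
  proof (cases "\<forall>x. x \<notin> K \<longrightarrow> f x = d")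
    case False
    then have "f \<notin> g ` set_pmf M"
      by (auto simp: g_def K_def)
    with False show ?thesis
      using finK by (simp add: pmf_Pi_outside pmf_map_outside)
  next
    case True
    define G where "G i j = (if i \<in> I \<and> j \<in> J i then f (j, i) else d)" for i j
    have "inj_on g D"
    proof (intro inj_onI ext)
      fix H H' i j
      assume "H \<in> D" "H' \<in> D" "g H = g H'"
      from \<open>g H = g H'\<close> have "g H (j, i) = g H' (j, i)"
        by simp
      with \<open>H \<in> D\<close> \<open>H' \<in> D\<close> show "H i j = H' i j"
        by (cases "i \<in> I \<and> j \<in> J i") (simp_all add: g_def D_def)
    qed
    moreover have "set_pmf M \<subseteq> D"
      unfolding M_def D_def using finI finJ by (rule set_pmf_Pi_pmf_nested_subset)
    moreover have "G \<in> D" "g G = f"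
      using True by (auto simp: D_def G_def g_def K_def fun_eq_iff)
    ultimately have "pmf (map_pmf g M) f = pmf M G"
      using pmf_map_inj_on by metis
    also have "\<dots> = (\<Prod>i\<in>I. \<Prod>j\<in>J i. pmf (P (j, i)) (f (j, i)))"
      unfolding M_def using finI finJ
      by (subst pmf_Pi') (auto simp: G_def pmf_Pi' intro!: prod.cong)
    also have "\<dots> = (\<Prod>x\<in>K. pmf (P x) (f x))"
      unfolding K_swap using finI finJ
      by (subst prod.reindex) (auto simp: prod.Sigma case_prod_unfold prod.swap_def)
    also have "\<dots> = pmf (Pi_pmf K d P) f"
      by (rule sym, rule pmf_Pi') (use finK True in auto)
    finally show ?thesis ..
  qed
qed

lemma finite_set_Pi_pmf:
  "finite A \<Longrightarrow> (\<And>u. u \<in> A \<Longrightarrow> finite (set_pmf (P u))) \<Longrightarrow> finite (set_pmf (Pi_pmf A d P))"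
  by (auto simp: set_Pi_pmf intro!: finite_PiE_dflt)

lemma pmf_entropy_Pi_pmf:
  assumes fin: "finite A" and finP: "\<And>u. u \<in> A \<Longrightarrow> finite (set_pmf (P u))"
  shows "pmf_entropy (Pi_pmf A d P) = (\<Sum>u\<in>A. pmf_entropy (P u))"
proof -
  define D where "D = Pi_pmf A d P"
  define h where "h = (\<lambda>u b. - log 2 (pmf (P u) b))"
  have finD: "finite (set_pmf D)"
    unfolding D_def using fin finP by (rule finite_set_Pi_pmf)
  have "pmf_entropy D = measure_pmf.expectation D (\<lambda>x. \<Sum>u\<in>A. h u (x u))"
    unfolding pmf_entropy_def
  proof (intro integral_cong_AE AE_pmfI)
    fix x assume "x \<in> set_pmf D"
    then have x: "x \<in> PiE_dflt A d (set_pmf \<circ> P)"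
      unfolding D_def using fin by (simp add: set_Pi_pmf)
    then have "pmf D x = (\<Prod>u\<in>A. pmf (P u) (x u))"
      unfolding D_def using fin by (simp add: pmf_Pi' PiE_dflt_def)
    moreover have "pmf (P u) (x u) \<noteq> 0" if "u \<in> A" for u
      using x that by (auto simp: PiE_dflt_def set_pmf_iff)
    ultimately have "ln (pmf D x) = (\<Sum>u\<in>A. ln (pmf (P u) (x u)))"
      using fin by (simp add: ln_prod)
    then show "- log 2 (pmf D x) = (\<Sum>u\<in>A. h u (x u))"
      by (simp add: h_def log_def sum_negf sum_divide_distrib)
  qed auto
  also have "\<dots> = (\<Sum>u\<in>A. measure_pmf.expectation (map_pmf (\<lambda>x. x u) D) (h u))"
    by (simp add: Bochner_Integration.integral_sum integrable_measure_pmf_finite[OF finD])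
  also have "\<dots> = (\<Sum>u\<in>A. pmf_entropy (P u))"
    unfolding D_def using fin
    by (intro sum.cong) (simp_all add: Pi_pmf_component pmf_entropy_def h_def)
  finally show ?thesis
    unfolding D_def .
qed

lemma pmf_entropy_bernoulli: "0 \<le> r \<Longrightarrow> r \<le> 1 \<Longrightarrow> pmf_entropy (bernoulli_pmf r) = hb r"
  by (simp add: pmf_entropy_def hb_def)

lemma bernoulli_pmf_1: "bernoulli_pmf 1 = return_pmf True"
  by (rule pmf_eqI) (simp add: indicator_def)

lemma map_pmf_ex_Pi_bernoulli:
  assumes fin: "finite J" and a: "\<And>v. v \<in> J \<Longrightarrow> 0 \<le> a v \<and> a v \<le> 1"
  shows "map_pmf (\<lambda>h. \<exists>v\<in>J. h v) (Pi_pmf J dflt (\<lambda>v. bernoulli_pmf (a v)))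
       = bernoulli_pmf (1 - (\<Prod>v\<in>J. 1 - a v))"
proof (rule pmf_eqI)
  let ?M = "Pi_pmf J dflt (\<lambda>v. bernoulli_pmf (a v))"
  have "(\<lambda>h. \<exists>v\<in>J. h v) -` {False} = Pi J (\<lambda>_. {False})"
    by (auto simp: Pi_def)
  then have "pmf (map_pmf (\<lambda>h. \<exists>v\<in>J. h v) ?M) False = (\<Prod>v\<in>J. measure (bernoulli_pmf (a v)) {False})"
    using fin by (simp add: pmf_map measure_Pi_pmf_Pi)
  also have "\<dots> = (\<Prod>v\<in>J. 1 - a v)"
    using a by (intro prod.cong) (auto simp: measure_pmf_single)
  finally have False_eq: "pmf (map_pmf (\<lambda>h. \<exists>v\<in>J. h v) ?M) False = (\<Prod>v\<in>J. 1 - a v)" .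
  have prod_01: "0 \<le> (\<Prod>v\<in>J. 1 - a v)" "(\<Prod>v\<in>J. 1 - a v) \<le> 1"
    using a by (auto intro!: prod_nonneg prod_le_1)
  have "sum (pmf (map_pmf (\<lambda>h. \<exists>v\<in>J. h v) ?M)) UNIV = 1"
    by (rule sum_pmf_eq_1) auto
  then have True_eq: "pmf (map_pmf (\<lambda>h. \<exists>v\<in>J. h v) ?M) True = 1 - (\<Prod>v\<in>J. 1 - a v)"
    using False_eq by (simp add: UNIV_bool)
  fix b
  from False_eq True_eq prod_01
  show "pmf (map_pmf (\<lambda>h. \<exists>v\<in>J. h v) ?M) b = pmf (bernoulli_pmf (1 - (\<Prod>v\<in>J. 1 - a v))) b"
    by (cases b) simp_all
qed

lemma map_pmf_disj_ex_Pi_bernoulli: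
  assumes fin: "finite J" and a: "\<And>v. v \<in> J \<Longrightarrow> 0 \<le> a v \<and> a v \<le> 1"
  shows "map_pmf (\<lambda>h. c \<or> (\<exists>v\<in>J. t v \<and> h v)) (Pi_pmf J False (\<lambda>v. bernoulli_pmf (a v)))
       = bernoulli_pmf (if c then 1 else 1 - (\<Prod>v\<in>{v \<in> J. t v}. 1 - a v))"
proof (cases c)
  case True
  then show ?thesis
    by (simp add: bernoulli_pmf_1 map_pmf_eq_return_pmf_iff)
next
  case False
  define J\<^sub>t where "J\<^sub>t = {v \<in> J. t v}"
  have restrict: "Pi_pmf J\<^sub>t False (\<lambda>v. bernoulli_pmf (a v))
      = map_pmf (\<lambda>h v. if v \<in> J\<^sub>t then h v else False) (Pi_pmf J False (\<lambda>v. bernoulli_pmf (a v)))"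
    by (rule Pi_pmf_subset) (auto simp: fin J\<^sub>t_def)
  have "map_pmf (\<lambda>h. c \<or> (\<exists>v\<in>J. t v \<and> h v)) (Pi_pmf J False (\<lambda>v. bernoulli_pmf (a v)))
      = map_pmf (\<lambda>h. \<exists>v\<in>J\<^sub>t. h v) (Pi_pmf J\<^sub>t False (\<lambda>v. bernoulli_pmf (a v)))"
    unfolding restrict pmf.map_comp o_def
    by (intro map_pmf_cong refl) (auto simp: J\<^sub>t_def False)
  also have "\<dots> = bernoulli_pmf (1 - (\<Prod>v\<in>J\<^sub>t. 1 - a v))"
    using fin a by (intro map_pmf_ex_Pi_bernoulli) (auto simp: J\<^sub>t_def)
  finally show ?thesis
    using False by (simp add: J\<^sub>t_def)
qed

lemma infection_pmf_eq_Pi_bernoulli: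
  fixes a :: "nat \<Rightarrow> nat \<Rightarrow> real"
  assumes a: "\<And>v u. 0 \<le> a v u \<and> a v u \<le> 1"
  shows "bind_pmf (Pi_pmf {(v, u). v < n \<and> u < n \<and> v \<noteq> u} False (\<lambda>(v, u). bernoulli_pmf (a v u)))
           (\<lambda>e. return_pmf (\<lambda>u. u < n \<and> (s u \<or> (\<exists>v<n. v \<noteq> u \<and> s v \<and> e (v, u)))))
       = Pi_pmf {..<n} False (\<lambda>u. bernoulli_pmf
           (if s u then 1 else 1 - (\<Prod>v\<in>{v. v < n \<and> v \<noteq> u \<and> s v}. 1 - a v u)))"
proof -
  define J where "J u = {v. v < n \<and> v \<noteq> u}" for u
  define E where
    "E = Pi_pmf {..<n} (\<lambda>_. False) (\<lambda>u. Pi_pmf (J u) False (\<lambda>v. bernoulli_pmf (a v u)))"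
  define infected where "infected u h \<longleftrightarrow> s u \<or> (\<exists>v\<in>J u. s v \<and> h v)" for u h
  have finJ: "finite (J u)" for u
    by (simp add: J_def)
  have edges: "Pi_pmf {(v, u). v < n \<and> u < n \<and> v \<noteq> u} False (\<lambda>(v, u). bernoulli_pmf (a v u))
      = map_pmf (\<lambda>G (v, u). if u \<in> {..<n} \<and> v \<in> J u then G u v else False) E"
  proof -
    have "{(v, u). v < n \<and> u < n \<and> v \<noteq> u} = {(v, u). u \<in> {..<n} \<and> v \<in> J u}"
      by (auto simp: J_def)
    then show ?thesis
      unfolding E_def by (simp only:) (subst Pi_pmf_group_snd; simp add: finJ)
  qed
  have "bind_pmf (Pi_pmf {(v, u). v < n \<and> u < n \<and> v \<noteq> u} False (\<lambda>(v, u). bernoulli_pmf (a v u)))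
           (\<lambda>e. return_pmf (\<lambda>u. u < n \<and> (s u \<or> (\<exists>v<n. v \<noteq> u \<and> s v \<and> e (v, u)))))
      = bind_pmf E (\<lambda>G. Pi_pmf {..<n} False (\<lambda>u. return_pmf (infected u (G u))))"
  proof (unfold edges bind_map_pmf, intro bind_pmf_cong refl, goal_cases)
    case (1 G)
    have "(\<lambda>u. u < n \<and> (s u \<or> (\<exists>v<n. v \<noteq> u \<and> s v \<and>
              (if u \<in> {..<n} \<and> v \<in> J u then G u v else False))))
        = (\<lambda>u. if u \<in> {..<n} then infected u (G u) else False)"
      unfolding infected_def J_def by (rule ext) auto
    then show ?case
      by simp
  qed
  also have "\<dots> = Pi_pmf {..<n} False
      (\<lambda>u. map_pmf (infected u) (Pi_pmf (J u) False (\<lambda>v. bernoulli_pmf (a v u))))"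
    unfolding E_def map_pmf_def by (rule Pi_pmf_bind[symmetric]) simp
  also have "\<dots> = Pi_pmf {..<n} False (\<lambda>u. bernoulli_pmf
           (if s u then 1 else 1 - (\<Prod>v\<in>{v. v < n \<and> v \<noteq> u \<and> s v}. 1 - a v u)))"
  proof (intro Pi_pmf_cong refl, goal_cases)
    case (1 u)
    have "{v \<in> J u. s v} = {v. v < n \<and> v \<noteq> u \<and> s v}"
      by (auto simp: J_def)
    moreover have "map_pmf (infected u) (Pi_pmf (J u) False (\<lambda>v. bernoulli_pmf (a v u)))
        = bernoulli_pmf (if s u then 1 else 1 - (\<Prod>v\<in>{v \<in> J u. s v}. 1 - a v u))"
      unfolding infected_def using a finJ by (intro map_pmf_disj_ex_Pi_bernoulli) auto
    ultimately show ?case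
      by simp
  qed
  finally show ?thesis .
qed

definition infection_prob :: "nat \<Rightarrow> nat \<Rightarrow> real \<Rightarrow> real \<Rightarrow> (nat \<Rightarrow> bool) \<Rightarrow> nat \<Rightarrow> real" where
  "infection_prob n k q1 q2 s u =
     (if s u then 1
      else 1 - (\<Prod>v\<in>{v. v < n \<and> v \<noteq> u \<and> s v}. 1 - (if v div k = u div k then q1 else q2)))"

lemma SBIM_eq_bind_seeds:
  assumes "0 \<le> q1" "q1 \<le> 1" "0 \<le> q2" "q2 \<le> 1"
  shows "SBIM n k p q1 q2 = bind_pmf (Pi_pmf {..<n} False (\<lambda>_. bernoulli_pmf p))
           (\<lambda>s. Pi_pmf {..<n} False (\<lambda>u. bernoulli_pmf (infection_prob n k q1 q2 s u)))"
  unfolding SBIM_def infection_prob_def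
  by (intro bind_pmf_cong refl infection_pmf_eq_Pi_bernoulli) (use assms in auto)

lemma infection_prob_bounds:
  assumes "0 \<le> q1" "q1 \<le> 1" "0 \<le> q2" "q2 \<le> 1"
  shows "0 \<le> infection_prob n k q1 q2 s u \<and> infection_prob n k q1 q2 s u \<le> 1"
proof -
  have "0 \<le> (\<Prod>v\<in>{v. v < n \<and> v \<noteq> u \<and> s v}. 1 - (if v div k = u div k then q1 else q2))"
       "(\<Prod>v\<in>{v. v < n \<and> v \<noteq> u \<and> s v}. 1 - (if v div k = u div k then q1 else q2)) \<le> 1"
    using assms by (auto intro!: prod_nonneg prod_le_1)
  then show ?thesis
    by (simp add: infection_prob_def)
qed

definition community :: "nat \<Rightarrow> nat \<Rightarrow> nat set" where
  "community k j = {j * k..<j * k + k}"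

lemma card_community: "card (community k j) = k"
  by (simp add: community_def)

lemma div_eq_iff_mem_community: "0 < k \<Longrightarrow> v div k = j \<longleftrightarrow> v \<in> community k j"
  using dividend_less_div_times[of k v] div_times_less_eq_dividend[of v k]
  by (auto intro!: div_nat_eqI simp: community_def mult.commute)

lemma community_subset: "j < m \<Longrightarrow> community k j \<subseteq> {..<m * k}"
  using mult_le_mono1[of "Suc j" m k] by (auto simp: community_def)

lemma infection_prob_cliques:
  assumes k: "0 < k" and u: "u < m * k" and not_seed: "\<not> s u"
  shows "infection_prob (m * k) k q 0 s u = 1 - (1 - q) ^ card {v \<in> community k (u div k). s v}"
proof -
  have "u div k < m"
    using u by (simp add: div_less_iff_less_mult k)
  then have same_community:
    "{v. v < m * k \<and> v \<noteq> u \<and> s v \<and> v div k = u div k} = {v \<in> community k (u div k). s v}"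
    using community_subset not_seed k by (auto simp: div_eq_iff_mem_community)
  have "(\<Prod>v\<in>{v. v < m * k \<and> v \<noteq> u \<and> s v}. 1 - (if v div k = u div k then q else 0))
      = (\<Prod>v\<in>{v \<in> {v. v < m * k \<and> v \<noteq> u \<and> s v}. v div k = u div k}. 1 - q)"
    by (subst prod.inter_filter) (auto intro!: prod.cong)
  then show ?thesis
    using not_seed by (simp add: infection_prob_def same_community)
qed

lemma card_non_seeds_community:
  "card {u \<in> community k j. \<not> s u} = k - card {v \<in> community k j. s v}"
proof -
  have "{u \<in> community k j. \<not> s u} = community k j - {v \<in> community k j. s v}"
    by blast
  moreover have "{v \<in> community k j. s v} \<subseteq> community k j" "finite (community k j)"
    by (auto simp: community_def)
  ultimately show ?thesis
    by (simp add: card_Diff_subset community_def)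
qed

lemma sum_hb_infection_prob_community:
  assumes k: "0 < k" and j: "j < m"
  shows "(\<Sum>u\<in>community k j. hb (infection_prob (m * k) k q 0 s u))
       = real (k - card {v \<in> community k j. s v}) * hb (1 - (1 - q) ^ card {v \<in> community k j. s v})"
proof -
  let ?Z = "card {v \<in> community k j. s v}"
  have "hb (infection_prob (m * k) k q 0 s u) = (if s u then 0 else hb (1 - (1 - q) ^ ?Z))"
    if u: "u \<in> community k j" for u
  proof (cases "s u")
    case True
    then show ?thesis
      by (simp add: infection_prob_def hb_def)
  next
    case False
    moreover have "u div k = j" "u < m * k"
      using u community_subset[OF j] k by (auto simp: div_eq_iff_mem_community)
    ultimately show ?thesis
      using k by (simp add: infection_prob_cliques)
  qed
  then have "(\<Sum>u\<in>community k j. hb (infection_prob (m * k) k q 0 s u))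
      = (\<Sum>u\<in>community k j. if \<not> s u then hb (1 - (1 - q) ^ ?Z) else 0)"
    by (intro sum.cong) auto
  also have "\<dots> = (\<Sum>u\<in>{u \<in> community k j. \<not> s u}. hb (1 - (1 - q) ^ ?Z))"
    by (rule sum.inter_filter[symmetric]) (simp add: community_def)
  also have "\<dots> = real (k - ?Z) * hb (1 - (1 - q) ^ ?Z)"
    by (simp add: card_non_seeds_community)
  finally show ?thesis .
qed

lemma sum_hb_infection_prob_cliques:
  assumes "0 < k"
  shows "(\<Sum>u<m * k. hb (infection_prob (m * k) k q 0 s u))
       = (\<Sum>j<m. real (k - card {v \<in> community k j. s v})
                   * hb (1 - (1 - q) ^ card {v \<in> community k j. s v}))"
  using sum_hb_infection_prob_community[OF assms]
  by (simp add: sum.nat_group[symmetric] community_def)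

lemma map_pmf_card_Pi_bernoulli:
  assumes "finite V" and "C \<subseteq> V" and "0 \<le> p" and "p \<le> 1"
  shows "map_pmf (\<lambda>s. card {v \<in> C. s v}) (Pi_pmf V dflt (\<lambda>_. bernoulli_pmf p))
       = binomial_pmf (card C) p"
proof -
  have "binomial_pmf (card C) p
      = map_pmf (\<lambda>s. card {v \<in> C. s v}) (Pi_pmf C dflt (\<lambda>_. bernoulli_pmf p))"
    using assms by (intro binomial_pmf_altdef') (auto intro: finite_subset)
  also have "Pi_pmf C dflt (\<lambda>_. bernoulli_pmf p)
      = map_pmf (\<lambda>s v. if v \<in> C then s v else dflt) (Pi_pmf V dflt (\<lambda>_. bernoulli_pmf p))"
    using assms by (intro Pi_pmf_subset)
  also have "map_pmf (\<lambda>s. card {v \<in> C. s v}) \<dots>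
      = map_pmf (\<lambda>s. card {v \<in> C. s v}) (Pi_pmf V dflt (\<lambda>_. bernoulli_pmf p))"
    unfolding pmf.map_comp o_def by (intro map_pmf_cong refl arg_cong[where f = card]) auto
  finally show ?thesis
    by (rule sym)
qed

lemma expectation_sum_community_counts:
  fixes f :: "nat \<Rightarrow> real"
  assumes "0 \<le> p" and "p \<le> 1"
  shows "measure_pmf.expectation (Pi_pmf {..<m * k} dflt (\<lambda>_. bernoulli_pmf p))
           (\<lambda>s. \<Sum>j<m. f (card {v \<in> community k j. s v}))
       = real m * measure_pmf.expectation (binomial_pmf k p) f"
proof -
  let ?S = "Pi_pmf {..<m * k} dflt (\<lambda>_. bernoulli_pmf p)"
  have binomial: "map_pmf (\<lambda>s. card {v \<in> community k j. s v}) ?S = binomial_pmf k p"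
    if "j < m" for j
    using map_pmf_card_Pi_bernoulli[OF _ community_subset[OF that] assms]
    by (simp add: card_community)
  have "finite (set_pmf ?S)"
    by (intro finite_set_Pi_pmf) auto
  then have "measure_pmf.expectation ?S (\<lambda>s. \<Sum>j<m. f (card {v \<in> community k j. s v}))
      = (\<Sum>j<m. measure_pmf.expectation (map_pmf (\<lambda>s. card {v \<in> community k j. s v}) ?S) f)"
    by (simp add: Bochner_Integration.integral_sum integrable_measure_pmf_finite)
  also have "\<dots> = (\<Sum>j<m. measure_pmf.expectation (binomial_pmf k p) f)"
    by (intro sum.cong refl) (simp only: binomial lessThan_iff)
  finally show ?thesis
    by simp
qed

lemma expectation_bind_pmf_ge:
  fixes f :: "'b \<Rightarrow> real"
  assumes fin: "finite (set_pmf M)" and finN: "\<And>x. x \<in> set_pmf M \<Longrightarrow> finite (set_pmf (N x))"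
    and le: "\<And>x. x \<in> set_pmf M \<Longrightarrow> g x \<le> measure_pmf.expectation (N x) f"
  shows "measure_pmf.expectation M g \<le> measure_pmf.expectation (bind_pmf M N) f"
proof -
  have "measure_pmf.expectation M g = (\<Sum>x\<in>set_pmf M. pmf M x * g x)"
    using fin by (simp add: integral_measure_pmf_real mult.commute)
  also have "\<dots> \<le> (\<Sum>x\<in>set_pmf M. pmf M x * measure_pmf.expectation (N x) f)"
    using le by (intro sum_mono mult_left_mono) auto
  also have "\<dots> = measure_pmf.expectation (bind_pmf M N) f"
    using fin finN by (simp add: pmf_expectation_bind[of "set_pmf M"])
  finally show ?thesis .
qed

lemma SBIM_expected_num_tests_ge:
  assumes "0 \<le> q1" "q1 \<le> 1" "0 \<le> q2" "q2 \<le> 1"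
    and recovers: "\<forall>x\<in>set_pmf (SBIM n k p q1 q2). gt_run A x = x"
  shows "measure_pmf.expectation (Pi_pmf {..<n} False (\<lambda>_. bernoulli_pmf p))
           (\<lambda>s. \<Sum>u<n. hb (infection_prob n k q1 q2 s u))
       \<le> measure_pmf.expectation (SBIM n k p q1 q2) (\<lambda>x. real (gt_num_tests A x))"
proof -
  let ?D = "\<lambda>s. Pi_pmf {..<n} False (\<lambda>u. bernoulli_pmf (infection_prob n k q1 q2 s u))"
  have SBIM: "SBIM n k p q1 q2 = bind_pmf (Pi_pmf {..<n} False (\<lambda>_. bernoulli_pmf p)) ?D"
    using assms(1-4) by (rule SBIM_eq_bind_seeds)
  have finD: "finite (set_pmf (?D s))" for s
    by (intro finite_set_Pi_pmf) auto
  have "(\<Sum>u<n. hb (infection_prob n k q1 q2 s u))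
      \<le> measure_pmf.expectation (?D s) (\<lambda>x. real (gt_num_tests A x))"
    if "s \<in> set_pmf (Pi_pmf {..<n} False (\<lambda>_. bernoulli_pmf p))" for s
  proof -
    have "(\<Sum>u<n. hb (infection_prob n k q1 q2 s u)) = pmf_entropy (?D s)"
      using infection_prob_bounds[OF assms(1-4)]
      by (simp add: pmf_entropy_Pi_pmf pmf_entropy_bernoulli)
    also have "\<dots> \<le> measure_pmf.expectation (?D s) (\<lambda>x. real (gt_num_tests A x))"
      using recovers that by (intro pmf_entropy_le_expected_num_tests finD) (auto simp: SBIM)
    finally show ?thesis .
  qed
  then show ?thesis
    unfolding SBIM by (intro expectation_bind_pmf_ge finD finite_set_Pi_pmf) auto
qed

theorem lemma3:
  fixes n k :: nat and p q :: real and A :: gt_scheme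
  assumes "0 < k" and "k dvd n" and "0 < p" and "p \<le> 1" and "0 \<le> q" and "q \<le> 1"
    and "\<forall>x\<in>set_pmf (SBIM n k p q 0). gt_run A x = x"
  shows "measure_pmf.expectation (SBIM n k p q 0) (\<lambda>x. real (gt_num_tests A x))
           \<ge> real (n div k) * measure_pmf.expectation (binomial_pmf k p)
                 (\<lambda>z. real (k - z) * hb (1 - (1 - q) ^ z))"
proof -
  obtain m where n: "n = m * k"
    using assms(2) by (metis dvdE mult.commute)
  let ?S = "Pi_pmf {..<n} False (\<lambda>_. bernoulli_pmf p)"
  let ?g = "\<lambda>z. real (k - z) * hb (1 - (1 - q) ^ z)"
  have "real (n div k) * measure_pmf.expectation (binomial_pmf k p) ?g
      = measure_pmf.expectation ?S (\<lambda>s. \<Sum>j<m. ?g (card {v \<in> community k j. s v}))"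
    unfolding n using assms(1,3,4) by (simp add: expectation_sum_community_counts[where f = ?g])
  also have "\<dots> = measure_pmf.expectation ?S (\<lambda>s. \<Sum>u<n. hb (infection_prob n k q 0 s u))"
    unfolding n using assms(1) by (simp add: sum_hb_infection_prob_cliques)
  also have "\<dots> \<le> measure_pmf.expectation (SBIM n k p q 0) (\<lambda>x. real (gt_num_tests A x))"
    using assms(5-7) by (intro SBIM_expected_num_tests_ge) auto
  finally show ?thesis .
qed

end
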